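(* Let $G$ be a free abelian group with a basis $E$, let $e\in E$, let $\check G$ be the subgroup generated by $E\setminus\{e\}$, and let $\lambda$ be the shift on $(G,e)^{\otimes\mathbb{Z}}$. If $z\in(G,e)^{\otimes\mathbb{Z}}$ and $w\in H(G,e)$ satisfy $(\mathrm{id}-\lambda)(z)=w$, then $z\in\mathbb{Z}e^{\otimes\mathbb{Z}}$ and $w=0$.
   Context: $(G,e)^{\otimes\mathbb{Z}}$ is the inductive limit of $G\to G^{\otimes3}\to G^{\otimes5}\to\cdots$ (tensor products over $\mathbb{Z}$) with connecting maps $x\mapsto e\otimes x\otimes e$; equivalently it is the span of formal tensors $\bigotimes_{i\in\mathbb{Z}}x_i$ with $x_i\in G$ and $x_i=e$ for all but finitely many $i$ (with $G^{\otimes 2n-1}$ identified with the span of those with $x_i=e$ for $|i|\ge n$). $e^{\otimes\mathbb{Z}}=\bigotimes_{i\in\mathbb{Z}}e$. The shift $\lambda$ is the automorphism with $\lambda(\bigotimes_i x_i)=\bigotimes_i x_{i-1}$. $\check G\otimes G^{\otimes\mathbb{N}}$ denotes the span of those $\bigotimes_i x_i$ with $x_0\in\check G$ and $x_i=e$ for all $i<0$, and $H(G,e):=\mathbb{Z}e^{\otimes\mathbb{Z}}+\check G\otimes G^{\otimes\mathbb{N}}$. *)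

theory Defs
  imports Main
begin

text \<open>The free abelian group G with basis E, realised concretely as the finitely
  supported integer-valued functions on E (coordinates w.r.t. the basis E).\<close>
definition freeab :: "'a set \<Rightarrow> ('a \<Rightarrow> int) set" where
  "freeab E = {x. finite {a. x a \<noteq> 0} \<and> {a. x a \<noteq> 0} \<subseteq> E}"

definition basis_vec :: "'a \<Rightarrow> 'a \<Rightarrow> int" where
  "basis_vec e = (\<lambda>a. if a = e then 1 else 0)"

text \<open>Subgroup of G generated by E - {e}: elements with vanishing e-coordinate.\<close>
definition check_G :: "'a set \<Rightarrow> 'a \<Rightarrow> ('a \<Rightarrow> int) set" where
  "check_G E e = {x \<in> freeab E. x e = 0}"

text \<open>Basis words of (G,e)^{\<otimes>Z}: sequences of basis elements, equal to e
  for all but finitely many indices.\<close>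
definition words :: "'a set \<Rightarrow> 'a \<Rightarrow> (int \<Rightarrow> 'a) set" where
  "words E e = {f. (\<forall>i. f i \<in> E) \<and> finite {i. f i \<noteq> e}}"

definition admissible :: "'a set \<Rightarrow> 'a \<Rightarrow> (int \<Rightarrow> 'a \<Rightarrow> int) \<Rightarrow> bool" where
  "admissible E e x \<longleftrightarrow> (\<forall>i. x i \<in> freeab E) \<and> finite {i. x i \<noteq> basis_vec e}"

text \<open>The formal tensor \<Otimes>_i x_i, written in coordinates with respect to the
  basis of (G,e)^{\<otimes>Z} formed by the tensors of basis elements (the words):
  the coefficient of the word f is the product of the coordinates x_i(f i).\<close>
definition tens :: "'a set \<Rightarrow> 'a \<Rightarrow> (int \<Rightarrow> 'a \<Rightarrow> int) \<Rightarrow> (int \<Rightarrow> 'a) \<Rightarrow> int" where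
  "tens E e x = (\<lambda>f. if f \<in> words E e
      then (\<Prod>i\<in>{i. x i \<noteq> basis_vec e} \<union> {i. f i \<noteq> e}. x i (f i)) else 0)"

definition int_span :: "('b \<Rightarrow> int) set \<Rightarrow> ('b \<Rightarrow> int) set" where
  "int_span A = {(\<lambda>f. \<Sum>k<(n::nat). (c k :: int) * v k f) | n c v. \<forall>k<n. v k \<in> A}"

definition tensZ :: "'a set \<Rightarrow> 'a \<Rightarrow> ((int \<Rightarrow> 'a) \<Rightarrow> int) set" where
  "tensZ E e = int_span {tens E e x | x. admissible E e x}"

definition eZ :: "'a set \<Rightarrow> 'a \<Rightarrow> (int \<Rightarrow> 'a) \<Rightarrow> int" where
  "eZ E e = tens E e (\<lambda>i. basis_vec e)"

text \<open>The shift \<lambda>(\<Otimes> x_i) = \<Otimes> x_{i-1}, in coordinates.\<close>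
definition shift :: "((int \<Rightarrow> 'a) \<Rightarrow> int) \<Rightarrow> (int \<Rightarrow> 'a) \<Rightarrow> int" where
  "shift z = (\<lambda>f. z (\<lambda>j. f (j + 1)))"

definition checkG_tens_N :: "'a set \<Rightarrow> 'a \<Rightarrow> ((int \<Rightarrow> 'a) \<Rightarrow> int) set" where
  "checkG_tens_N E e = int_span {tens E e x | x. admissible E e x \<and> x 0 \<in> check_G E e
      \<and> (\<forall>i<0. x i = basis_vec e)}"

definition H_set :: "'a set \<Rightarrow> 'a \<Rightarrow> ((int \<Rightarrow> 'a) \<Rightarrow> int) set" where
  "H_set E e = {(\<lambda>f. c * eZ E e f + h f) | c h. h \<in> checkG_tens_N E e}"

end

theory Submission
  imports Defs
begin

text \<open>
  Everything is read off coordinates with respect to the basis of words. A word occurring in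
  an element of (G,e)^{\<otimes>Z} has its letters different from e inside a fixed finite set of
  positions, while a word occurring in \<check>G \<otimes> G^{\<otimes>N} has its first letter different
  from e exactly at position 0. Comparing coefficients at the constant word shows that the
  e^{\<otimes>Z}-component of w vanishes. For any other word f, the coefficients of z along the shift
  orbit of f form an integer sequence with finite support whose successive differences are the
  coefficients of w, and at most one of those is nonzero (the one where the first letter
  different from e sits at position 0). Such a sequence vanishes, and so do its differences.
\<close>

lemma int_seq_eq_0_if_single_jump:
  fixes u v :: "int \<Rightarrow> int" and N :: int
  assumes diff: "\<And>k. u k - u (k + 1) = v k"
    and single: "\<And>k l. v k \<noteq> 0 \<Longrightarrow> v l \<noteq> 0 \<Longrightarrow> k = l"
    and bounded: "\<And>k. N < \<bar>k\<bar> \<Longrightarrow> u k = 0"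
  shows "u k = 0"
proof -
  define n where "n = nat (\<bar>k\<bar> + \<bar>N\<bar> + 1)"
  consider "\<forall>j\<ge>k. v j = 0" | "\<forall>j<k. v j = 0"
  proof (cases "\<forall>j\<ge>k. v j = 0")
    case False
    then obtain l where "k \<le> l" "v l \<noteq> 0" by auto
    then have "\<forall>j<k. v j = 0" using single[of _ l] by (metis not_le)
    then show ?thesis by (rule that(2))
  next
    case True
    then show ?thesis by (rule that(1))
  qed
  then show ?thesis
  proof cases
    case 1
    have "u k = u (k + int m)" for m
    proof (induction m)
      case (Suc m)
      have "u (k + int m) = u (k + int m + 1)" using diff[of "k + int m"] 1 by simp
      moreover have "k + int (Suc m) = k + int m + 1" by simp
      ultimately show ?case using Suc by presburger
    qed simp
    also have "u (k + int n) = 0" by (rule bounded) (simp add: n_def)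
    finally show ?thesis .
  next
    case 2
    have "u (k - int m) = u k" for m
    proof (induction m)
      case (Suc m)
      have "u (k - int (Suc m)) - u (k - int (Suc m) + 1) = 0"
        using diff[of "k - int (Suc m)"] 2 by simp
      then show ?case using Suc by simp
    qed simp
    moreover have "u (k - int n) = 0" by (rule bounded) (simp add: n_def)
    ultimately show ?thesis by simp
  qed
qed

lemma int_span_nonzero_imp_generators:
  assumes "z \<in> int_span A"
  shows "\<exists>(n::nat) v. (\<forall>k<n. v k \<in> A) \<and> (\<forall>f. z f \<noteq> 0 \<longrightarrow> (\<exists>k<n. v k f \<noteq> 0))"
proof -
  obtain n :: nat and c v where z: "z = (\<lambda>f. \<Sum>k<n. c k * v k f)" and v: "\<forall>k<n. v k \<in> A"
    using assms unfolding int_span_def by blast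
  have "\<exists>k<n. v k f \<noteq> 0" if "z f \<noteq> 0" for f
    using that unfolding z by (metis (mono_tags, lifting) lessThan_iff mult_zero_right sum.neutral)
  with v show ?thesis by blast
qed

lemma int_span_nonzero_imp_generator:
  assumes "z \<in> int_span A" "z f \<noteq> 0"
  shows "\<exists>v\<in>A. v f \<noteq> 0"
  using int_span_nonzero_imp_generators[OF assms(1)] assms(2) by blast

lemma tens_nonzero_imp_factors_nonzero:
  assumes "admissible E e x" "tens E e x f \<noteq> 0"
  shows "x i (f i) \<noteq> 0"
proof -
  have f: "f \<in> words E e" using assms(2) unfolding tens_def by (auto split: if_splits)
  let ?S = "{i. x i \<noteq> basis_vec e} \<union> {i. f i \<noteq> e}"
  have "finite ?S" using assms(1) f unfolding admissible_def words_def by auto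
  moreover have "(\<Prod>i\<in>?S. x i (f i)) \<noteq> 0" using assms(2) f unfolding tens_def by auto
  ultimately have "i \<in> ?S \<Longrightarrow> x i (f i) \<noteq> 0" by (metis prod_zero)
  then show "x i (f i) \<noteq> 0" by (cases "i \<in> ?S") (auto simp: basis_vec_def)
qed

lemma tensZ_support_bounded:
  assumes "z \<in> tensZ E e"
  obtains T where "finite T" "\<And>f. z f \<noteq> 0 \<Longrightarrow> {i. f i \<noteq> e} \<subseteq> T"
proof -
  obtain n :: nat and v where v: "\<forall>k<n. v k \<in> {tens E e x |x. admissible E e x}"
    and z: "\<And>f. z f \<noteq> 0 \<Longrightarrow> \<exists>k<n. v k f \<noteq> 0"
    using int_span_nonzero_imp_generators[OF assms[unfolded tensZ_def]] by blast
  have "\<forall>k<n. \<exists>x. v k = tens E e x \<and> admissible E e x" using v by blast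
  then obtain x where x: "\<And>k. k < n \<Longrightarrow> v k = tens E e (x k) \<and> admissible E e (x k)"
    by metis
  show ?thesis
  proof
    show "finite (\<Union>k<n. {i. x k i \<noteq> basis_vec e})"
      using x unfolding admissible_def by auto
  next
    fix f assume "z f \<noteq> 0"
    then obtain k where k: "k < n" "tens E e (x k) f \<noteq> 0" using z x by metis
    have "x k i \<noteq> basis_vec e" if "f i \<noteq> e" for i
      using tens_nonzero_imp_factors_nonzero[of E e "x k" f i] k x that
      by (auto simp: basis_vec_def)
    then show "{i. f i \<noteq> e} \<subseteq> (\<Union>k<n. {i. x k i \<noteq> basis_vec e})" using k(1) by blast
  qed
qed

lemma checkG_tens_N_nonzero_imp:
  assumes "h \<in> checkG_tens_N E e" "h f \<noteq> 0"
  shows "\<forall>i<0. f i = e" "f 0 \<noteq> e"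
proof -
  obtain x where x: "admissible E e x" "x 0 \<in> check_G E e" "\<forall>i<0. x i = basis_vec e"
    and f: "tens E e x f \<noteq> 0"
    using int_span_nonzero_imp_generator[of h _ f] assms unfolding checkG_tens_N_def by auto
  have nonzero: "x i (f i) \<noteq> 0" for i using tens_nonzero_imp_factors_nonzero[OF x(1) f] .
  show "\<forall>i<0. f i = e"
  proof (intro allI impI)
    fix i :: int assume "i < 0"
    then have "basis_vec e (f i) \<noteq> 0" using nonzero[of i] x(3) by simp
    then show "f i = e" by (simp add: basis_vec_def split: if_splits)
  qed
  show "f 0 \<noteq> e" using nonzero[of 0] x(2) by (auto simp: check_G_def)
qed

lemma eZ_apply:
  assumes "e \<in> E"
  shows "eZ E e f = (if f = (\<lambda>_. e) then 1 else 0)"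
proof -
  have const: "eZ E e (\<lambda>_. e) = 1" using assms by (simp add: eZ_def tens_def words_def)
  have support: "f = (\<lambda>_. e)" if "eZ E e f \<noteq> 0"
  proof -
    have "admissible E e (\<lambda>_. basis_vec e)"
      using assms by (simp add: admissible_def basis_vec_def freeab_def)
    then have "basis_vec e (f i) \<noteq> 0" for i
      using that unfolding eZ_def by (rule tens_nonzero_imp_factors_nonzero)
    then have "f i = e" for i by (metis basis_vec_def)
    then show ?thesis by (simp add: fun_eq_iff)
  qed
  show ?thesis
  proof (cases "f = (\<lambda>_. e)")
    case True
    then show ?thesis using const by simp
  next
    case False
    then have "eZ E e f = 0" using support by blast
    with False show ?thesis by simp
  qed
qed

lemma shift_orbit_eq_0:
  fixes z w :: "(int \<Rightarrow> 'a) \<Rightarrow> int"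
  assumes "finite T" and z_supp: "\<And>f. z f \<noteq> 0 \<Longrightarrow> {i. f i \<noteq> e} \<subseteq> T"
    and diff: "\<And>f. w f = z f - z (\<lambda>j. f (j + 1))"
    and w_supp: "\<And>f. w f \<noteq> 0 \<Longrightarrow> (\<forall>i<0. f i = e) \<and> f 0 \<noteq> e"
    and "f \<noteq> (\<lambda>_. e)"
  shows "z f = 0" "w f = 0"
proof -
  define u where "u k = z (\<lambda>j. f (j + k))" for k
  define v where "v k = w (\<lambda>j. f (j + k))" for k
  obtain a where a: "f a \<noteq> e" using \<open>f \<noteq> (\<lambda>_. e)\<close> by auto
  obtain B where B: "\<forall>t\<in>T. \<bar>t\<bar> \<le> B"
    using bdd_above_finite[of "abs ` T"] \<open>finite T\<close> by (auto simp: bdd_above_def)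
  have u_diff: "u k - u (k + 1) = v k" for k
    unfolding u_def v_def diff by (simp add: ac_simps)
  have leading: "f k \<noteq> e \<and> (\<forall>j<k. f j = e)" if "v k \<noteq> 0" for k
  proof -
    have shifted: "(\<forall>i<0. f (i + k) = e) \<and> f k \<noteq> e"
      using w_supp[OF that[unfolded v_def]] by simp
    have "f j = e" if "j < k" for j
      using shifted that by (metis add.commute diff_add_cancel diff_less_0_iff_less)
    with shifted show ?thesis by blast
  qed
  have "u k = 0" for k
  proof (rule int_seq_eq_0_if_single_jump[where u = u and v = v, OF u_diff])
    fix k l assume "v k \<noteq> 0" "v l \<noteq> 0"
    then show "k = l" using leading by (meson linorder_neqE)
  next
    fix k assume far: "\<bar>a\<bar> + B < \<bar>k\<bar>"
    show "u k = 0"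
    proof (rule ccontr)
      assume "u k \<noteq> 0"
      then have "a - k \<in> T" using z_supp a unfolding u_def by fastforce
      then show False using B far by fastforce
    qed
  qed
  then have "u 0 = 0" "v 0 = 0" using u_diff[of 0] by simp_all
  then show "z f = 0" "w f = 0" by (simp_all add: u_def v_def)
qed

theorem lemma2:
  fixes E :: "'a set" and e :: 'a
    and z w :: "(int \<Rightarrow> 'a) \<Rightarrow> int"
  assumes "e \<in> E"
    and "z \<in> tensZ E e"
    and "w \<in> H_set E e"
    and "(\<lambda>f. z f - shift z f) = w"
  shows "(\<exists>c::int. z = (\<lambda>f. c * eZ E e f)) \<and> w = (\<lambda>f. 0)"
proof -
  obtain T where T: "finite T" "\<And>f. z f \<noteq> 0 \<Longrightarrow> {i. f i \<noteq> e} \<subseteq> T"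
    using tensZ_support_bounded[OF assms(2)] by metis
  obtain c h where w: "w = (\<lambda>f. c * eZ E e f + h f)" and h: "h \<in> checkG_tens_N E e"
    using assms(3) unfolding H_set_def by blast
  have diff: "w f = z f - z (\<lambda>j. f (j + 1))" for f
    using assms(4) by (auto simp: shift_def)
  have "w (\<lambda>_. e) = 0" "h (\<lambda>_. e) = 0"
    using diff checkG_tens_N_nonzero_imp(2)[OF h] by auto
  then have "c = 0" using w eZ_apply[OF assms(1)] by simp
  then have "w = h" using w by simp
  then have w_supp: "(\<forall>i<0. f i = e) \<and> f 0 \<noteq> e" if "w f \<noteq> 0" for f
    using checkG_tens_N_nonzero_imp[OF h] that by simp
  have vanish: "z f = 0 \<and> w f = 0" if "f \<noteq> (\<lambda>_. e)" for f
    using shift_orbit_eq_0[of T z e w f, OF T diff w_supp that] by blast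
  have "z = (\<lambda>f. z (\<lambda>_. e) * eZ E e f)"
  proof
    fix f
    show "z f = z (\<lambda>_. e) * eZ E e f"
      using vanish[of f] by (cases "f = (\<lambda>_. e)") (auto simp: eZ_apply[OF assms(1)])
  qed
  moreover have "w = (\<lambda>f. 0)"
    using vanish \<open>w (\<lambda>_. e) = 0\<close> by (metis ext)
  ultimately show ?thesis by blast
qed

end
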